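(* Suppose $n$ is even, $f:\{0,1\}^n\to\mathbb{R}$ is submodular, and $f(x)<0$ for some $x$ with $\|x\|_1=n/2$. Then there are at least $2^{n/2}$ points $y\in\{0,1\}^n$ such that $f(y)\neq 0$.
   Context: $f$ is submodular if $f(x+\mathbf{e}_i)-f(x)\ge f(y+\mathbf{e}_i)-f(y)$ for all $i$ and all $x\le y$ (coordinatewise) with $x_i=y_i=0$, where $\mathbf{e}_i$ is the $i$-th standard basis vector. *)

theory Defs
  imports Complex_Main
begin

definition cube :: "nat \<Rightarrow> (nat \<Rightarrow> nat) set" where
  "cube n = {x. (\<forall>i<n. x i \<in> {0,1}) \<and> (\<forall>i\<ge>n. x i = 0)}"

definition unitvec :: "nat \<Rightarrow> (nat \<Rightarrow> nat)" where
  "unitvec i = (\<lambda>j. if j = i then 1 else 0)"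

definition submodular_cube :: "nat \<Rightarrow> ((nat \<Rightarrow> nat) \<Rightarrow> real) \<Rightarrow> bool" where
  "submodular_cube n f \<longleftrightarrow>
     (\<forall>x\<in>cube n. \<forall>y\<in>cube n. \<forall>i<n.
        (\<forall>j. x j \<le> y j) \<and> x i = 0 \<and> y i = 0 \<longrightarrow>
        f (\<lambda>j. x j + unitvec i j) - f x \<ge> f (\<lambda>j. y j + unitvec i j) - f y)"

end

theory Submission
  imports Defs
begin

text \<open>Let \<open>S\<close> be the support of the point \<open>x\<close> with \<open>f x < 0\<close> and \<open>T\<close> its complement, so
  \<open>|S| = |T| = n/2\<close>. If \<open>f\<close> vanishes on no subset of \<open>S\<close>, these \<open>2^(n/2)\<close> subsets are the
  required points. Otherwise pick \<open>U \<subseteq> S\<close> with \<open>f U = 0\<close>. For every \<open>W \<subseteq> T\<close>, diminishing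
  returns gives \<open>f (S \<union> W) - f S \<le> f (U \<union> W) - f U\<close>, i.e. \<open>f (S \<union> W) < f (U \<union> W)\<close>, so one
  of the two sets is a nonzero point; both meet \<open>T\<close> exactly in \<open>W\<close>, which gives \<open>2^(n/2)\<close>
  distinct nonzero points.\<close>

definition char_vec :: "nat set \<Rightarrow> nat \<Rightarrow> nat" where
  "char_vec A = (\<lambda>j. if j \<in> A then 1 else 0)"

lemma inj_char_vec: "inj char_vec"
proof (rule injI)
  fix A B assume "char_vec A = char_vec B"
  then have "\<And>j. j \<in> A \<longleftrightarrow> j \<in> B" unfolding char_vec_def by (metis one_neq_zero)
  then show "A = B" by blast
qed

lemma char_vec_in_cube: "A \<subseteq> {..<n} \<Longrightarrow> char_vec A \<in> cube n"
  unfolding char_vec_def cube_def by auto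

lemma cube_eq_char_vec_support:
  assumes "x \<in> cube n"
  shows "x = char_vec {i. i < n \<and> x i = 1}"
  using assms unfolding cube_def char_vec_def by (intro ext) (auto; metis leI)

lemma sum_char_vec: "A \<subseteq> {..<n} \<Longrightarrow> (\<Sum>i<n. char_vec A i) = card A"
  unfolding char_vec_def by (simp add: sum.If_cases Int_absorb1)

lemma finite_cube: "finite (cube n)"
proof -
  have "cube n \<subseteq> char_vec ` Pow {..<n}"
    using cube_eq_char_vec_support by (metis (no_types, lifting) Pow_iff image_eqI mem_Collect_eq
        lessThan_iff subsetI)
  then show ?thesis by (rule finite_subset) simp
qed

lemma char_vec_insert: "i \<notin> A \<Longrightarrow> (\<lambda>j. char_vec A j + unitvec i j) = char_vec (insert i A)"
  unfolding char_vec_def unitvec_def by (rule ext) auto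

lemma submodular_cube_insert:
  assumes "submodular_cube n f" "A \<subseteq> B" "B \<subseteq> {..<n}" "i < n" "i \<notin> B"
  shows "f (char_vec (insert i B)) - f (char_vec B) \<le> f (char_vec (insert i A)) - f (char_vec A)"
proof -
  have "i \<notin> A" using assms by blast
  moreover have "char_vec A \<in> cube n" "char_vec B \<in> cube n"
    using assms by (auto intro: char_vec_in_cube)
  moreover have "\<forall>j. char_vec A j \<le> char_vec B j" "char_vec A i = 0" "char_vec B i = 0"
    using assms \<open>i \<notin> A\<close> unfolding char_vec_def by auto
  ultimately have "f (\<lambda>j. char_vec B j + unitvec i j) - f (char_vec B)
      \<le> f (\<lambda>j. char_vec A j + unitvec i j) - f (char_vec A)"
    using assms(1,4) unfolding submodular_cube_def by blast
  then show ?thesis using char_vec_insert \<open>i \<notin> A\<close> assms(5) by simp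
qed

lemma submodular_cube_union:
  assumes "submodular_cube n f" "finite W" "A \<subseteq> B" "B \<subseteq> {..<n}" "W \<subseteq> {..<n}" "W \<inter> B = {}"
  shows "f (char_vec (B \<union> W)) - f (char_vec B) \<le> f (char_vec (A \<union> W)) - f (char_vec A)"
  using assms(2,5,6)
proof (induction W rule: finite_induct)
  case empty
  then show ?case by simp
next
  case (insert i W)
  then have "f (char_vec (insert i (B \<union> W))) - f (char_vec (B \<union> W))
      \<le> f (char_vec (insert i (A \<union> W))) - f (char_vec (A \<union> W))"
    using submodular_cube_insert[OF assms(1), of "A \<union> W" "B \<union> W" i] assms(3,4) by auto
  with insert show ?case by simp
qed

lemma card_nonzero_ge_pow:
  assumes "inj_on g (Pow T)" "finite T" "g ` Pow T \<subseteq> {y \<in> cube n. f y \<noteq> 0}"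
  shows "2 ^ card T \<le> card {y \<in> cube n. f y \<noteq> 0}"
proof -
  have "card (g ` Pow T) \<le> card {y \<in> cube n. f y \<noteq> 0}"
    using assms(3) finite_cube by (intro card_mono) auto
  with assms(1,2) show ?thesis by (simp add: card_image card_Pow)
qed

lemma card_nonzero_ge_if_vanishing_subset:
  assumes sub: "submodular_cube n f" and S: "S \<subseteq> {..<n}" "f (char_vec S) < 0"
    and U: "U \<subseteq> S" "f (char_vec U) = 0"
  shows "2 ^ (n - card S) \<le> card {y \<in> cube n. f y \<noteq> 0}"
proof -
  define T where "T = {..<n} - S"
  define pick where
    "pick W = (if f (char_vec (S \<union> W)) \<noteq> 0 then S \<union> W else U \<union> W)" for W
  have nonzero: "f (char_vec (pick W)) \<noteq> 0" if "W \<subseteq> T" for W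
  proof -
    have "finite W" using that unfolding T_def by (simp add: finite_subset)
    then have "f (char_vec (S \<union> W)) - f (char_vec S) \<le> f (char_vec (U \<union> W)) - f (char_vec U)"
      using submodular_cube_union[OF sub \<open>finite W\<close> \<open>U \<subseteq> S\<close>] S(1) that
      unfolding T_def by auto
    with S U show ?thesis unfolding pick_def by auto
  qed
  have pick_inter: "pick W \<inter> T = W" and pick_sub: "pick W \<subseteq> {..<n}" if "W \<subseteq> T" for W
    using that U S unfolding pick_def T_def by auto
  have "inj_on (char_vec \<circ> pick) (Pow T)"
    by (rule inj_onI) (metis PowD pick_inter comp_apply inj_char_vec injD)
  moreover have "finite T" unfolding T_def by simp
  moreover have "(char_vec \<circ> pick) ` Pow T \<subseteq> {y \<in> cube n. f y \<noteq> 0}"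
    using nonzero pick_sub by (auto intro: char_vec_in_cube)
  ultimately have "2 ^ card T \<le> card {y \<in> cube n. f y \<noteq> 0}"
    by (rule card_nonzero_ge_pow)
  moreover have "card T = n - card S" unfolding T_def using S by (simp add: card_Diff_subset finite_subset)
  ultimately show ?thesis by simp
qed

lemma card_nonzero_ge_min:
  assumes "submodular_cube n f" "S \<subseteq> {..<n}" "f (char_vec S) < 0"
  shows "2 ^ min (card S) (n - card S) \<le> card {y \<in> cube n. f y \<noteq> 0}"
proof (cases "\<exists>U\<subseteq>S. f (char_vec U) = 0")
  case True
  then have "2 ^ (n - card S) \<le> card {y \<in> cube n. f y \<noteq> 0}"
    using card_nonzero_ge_if_vanishing_subset assms by blast
  then show ?thesis by (meson le_trans min.cobounded2 one_le_numeral power_increasing)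
next
  case False
  have "2 ^ card S \<le> card {y \<in> cube n. f y \<noteq> 0}"
    using False assms(2) inj_char_vec
    by (intro card_nonzero_ge_pow) (auto intro: char_vec_in_cube inj_on_subset finite_subset)
  then show ?thesis by (meson le_trans min.cobounded1 one_le_numeral power_increasing)
qed

theorem lemma7:
  fixes n :: nat and f :: "(nat \<Rightarrow> nat) \<Rightarrow> real"
  assumes "even n"
    and "submodular_cube n f"
    and "\<exists>x\<in>cube n. (\<Sum>i<n. x i) = n div 2 \<and> f x < 0"
  shows "card {y \<in> cube n. f y \<noteq> 0} \<ge> 2 ^ (n div 2)"
proof -
  obtain x where x: "x \<in> cube n" "(\<Sum>i<n. x i) = n div 2" "f x < 0"
    using assms(3) by blast
  define S where "S = {i. i < n \<and> x i = 1}"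
  have "S \<subseteq> {..<n}" unfolding S_def by auto
  moreover have x_eq: "x = char_vec S" unfolding S_def by (rule cube_eq_char_vec_support[OF x(1)])
  ultimately have "card S = n div 2" using x(2) sum_char_vec by simp
  with \<open>even n\<close> have "min (card S) (n - card S) = n div 2" by auto
  with card_nonzero_ge_min[OF assms(2) \<open>S \<subseteq> {..<n}\<close>] x(3) x_eq show ?thesis by simp
qed

end
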